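(* Let $A=\mathbb Q[x_1,x_2,\dots]$ be the polynomial algebra graded by $\deg x_n=n$, and let $d:A\to A$ be the derivation with $d x_n=x_{n-1}$ for $n\ge2$ and $d x_1=0$ (so $d$ lowers degree by $1$). Then every element of $A$ of positive degree lies in the image of $d$.
   Context: Equivalently, in terms of $s_n=n!\,x_n$ (the universal power sums in the rational cohomology of the index-zero Fredholm operators), $d s_n=n s_{n-1}$ for $n\ge2$ and $d s_1=0$. *)

theory Defs
  imports Complex_Main "HOL-Library.Poly_Mapping"
begin

text \<open>A monomial is a finitely supported
exponent vector; the key i of a monomial stands for the variable x_(i+1).\<close>

type_synonym mono = "nat \<Rightarrow>\<^sub>0 nat"
type_synonym qpoly = "mono \<Rightarrow>\<^sub>0 rat"

definition Xv :: "nat \<Rightarrow> qpoly" where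
  "Xv n = Poly_Mapping.single (Poly_Mapping.single (n - 1) 1) 1"

definition const :: "rat \<Rightarrow> qpoly" where
  "const c = Poly_Mapping.single 0 c"

definition wdeg :: "mono \<Rightarrow> nat" where
  "wdeg m = (\<Sum>i\<in>Poly_Mapping.keys m. (i + 1) * Poly_Mapping.lookup m i)"

definition homogeneous :: "nat \<Rightarrow> qpoly \<Rightarrow> bool" where
  "homogeneous k p \<longleftrightarrow> (\<forall>m\<in>Poly_Mapping.keys p. wdeg m = k)"

definition is_derivation :: "(qpoly \<Rightarrow> qpoly) \<Rightarrow> bool" where
  "is_derivation D \<longleftrightarrow>
     (\<forall>p q. D (p + q) = D p + D q) \<and>
     (\<forall>c p. D (const c * p) = const c * D p) \<and>
     (\<forall>p q. D (p * q) = p * D q + D p * q)"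

end

theory Submission
  imports Defs
begin

text \<open>By the Leibniz rule, d(x_(n+1) r) = x_(n+1) d(r) + x_n r, and d(r) has smaller
degree than r. Hence, by induction on the degree of r, every product x_n r lies in the
image of d. Every monomial of positive degree is such a product, the image of d is
closed under addition, and a homogeneous polynomial of positive degree has no constant
term.\<close>

lemma poly_mapping_single_induct [consumes 1, case_names 0 plus single]:
  fixes p :: "'k \<Rightarrow>\<^sub>0 'v::monoid_add"
  assumes "Poly_Mapping.keys p \<subseteq> S"
    and "P 0"
    and "\<And>x y. P x \<Longrightarrow> P y \<Longrightarrow> P (x + y)"
    and "\<And>m c. m \<in> S \<Longrightarrow> P (Poly_Mapping.single m c)"
  shows "P p"
  using assms(1)
proof (induction p rule: Poly_Mapping.update_induct)
  case const
  then show ?case using assms(2) by simp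
next
  case (update g u w)
  have split: "Poly_Mapping.update u w g = Poly_Mapping.single u w + g"
    using update.hyps(1)
    by (intro poly_mapping_eqI) (auto simp: lookup_update lookup_add lookup_single in_keys_iff when_def)
  have "Poly_Mapping.keys (Poly_Mapping.update u w g) = insert u (Poly_Mapping.keys g)"
    unfolding split using update.hyps
    by (auto simp: in_keys_iff lookup_add lookup_single when_def split: if_splits)
  then show ?case using update split assms(3,4) by auto
qed

lemma nat_poly_mapping_induct [case_names 0 add_single]:
  fixes m :: "'a \<Rightarrow>\<^sub>0 nat"
  assumes "P 0" and "\<And>m i. P m \<Longrightarrow> P (m + Poly_Mapping.single i 1)"
  shows "P m"
proof (induction m rule: Poly_Mapping.update_induct)
  case const
  then show ?case using assms(1) by simp
next
  case (update g u w)
  have "P (g + Poly_Mapping.single u n)" for n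
  proof (induction n)
    case 0
    then show ?case using update by simp
  next
    case (Suc n)
    have "g + Poly_Mapping.single u (Suc n) = (g + Poly_Mapping.single u n) + Poly_Mapping.single u 1"
      by (simp add: single_add[symmetric] add.assoc)
    then show ?case using Suc assms(2) by metis
  qed
  moreover have "Poly_Mapping.update u w g = g + Poly_Mapping.single u w"
    using update.hyps(1)
    by (intro poly_mapping_eqI) (auto simp: lookup_update lookup_add lookup_single in_keys_iff when_def)
  ultimately show ?case by simp
qed

lemma wdeg_eq_sum_superset:
  assumes "finite S" "Poly_Mapping.keys m \<subseteq> S"
  shows "wdeg m = (\<Sum>i\<in>S. (i + 1) * Poly_Mapping.lookup m i)"
  unfolding wdeg_def
  by (rule sum.mono_neutral_left) (use assms in \<open>auto simp: in_keys_iff\<close>)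

lemma wdeg_add: "wdeg (a + b) = wdeg a + wdeg b"
proof -
  let ?S = "Poly_Mapping.keys a \<union> Poly_Mapping.keys b"
  have "wdeg (a + b) = (\<Sum>i\<in>?S. (i + 1) * Poly_Mapping.lookup (a + b) i)"
    by (rule wdeg_eq_sum_superset) (simp_all add: keys_add)
  also have "\<dots> = (\<Sum>i\<in>?S. (i + 1) * Poly_Mapping.lookup a i) + (\<Sum>i\<in>?S. (i + 1) * Poly_Mapping.lookup b i)"
    by (simp add: lookup_add add_mult_distrib2 sum.distrib)
  also have "\<dots> = wdeg a + wdeg b"
    using wdeg_eq_sum_superset[of ?S a] wdeg_eq_sum_superset[of ?S b] by simp
  finally show ?thesis .
qed

lemma wdeg_single [simp]: "wdeg (Poly_Mapping.single i n) = Suc i * n"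
  unfolding wdeg_def by (cases "n = 0") simp_all

lemma wdeg_zero [simp]: "wdeg 0 = 0"
  unfolding wdeg_def by simp

lemma Xv_Suc_mult_single:
  "Xv (Suc i) * Poly_Mapping.single m c = Poly_Mapping.single (m + Poly_Mapping.single i 1) c"
  unfolding Xv_def mult_single by (simp add: add.commute)

lemma single_eq_const_mult: "Poly_Mapping.single m c = const c * Poly_Mapping.single m 1"
  unfolding const_def mult_single by simp

lemma keys_single_mult:
  "Poly_Mapping.keys (Poly_Mapping.single a c * q) \<subseteq> (+) a ` Poly_Mapping.keys (q::qpoly)"
  using keys_mult[of "Poly_Mapping.single a c" q] by (auto split: if_splits)

definition deg_less :: "nat \<Rightarrow> qpoly set" where
  "deg_less k = {r. \<forall>m\<in>Poly_Mapping.keys r. wdeg m < k}"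

lemma zero_in_deg_less [simp]: "0 \<in> deg_less k"
  unfolding deg_less_def by simp

lemma add_in_deg_less: "a \<in> deg_less k \<Longrightarrow> b \<in> deg_less k \<Longrightarrow> a + b \<in> deg_less k"
  unfolding deg_less_def using keys_add[of a b] by auto

lemma deg_less_mono: "a \<in> deg_less k \<Longrightarrow> k \<le> j \<Longrightarrow> a \<in> deg_less j"
  unfolding deg_less_def using less_le_trans by blast

lemma single_in_deg_less: "wdeg m < k \<Longrightarrow> Poly_Mapping.single m c \<in> deg_less k"
  unfolding deg_less_def by simp

lemma const_mult_in_deg_less: "r \<in> deg_less k \<Longrightarrow> const c * r \<in> deg_less k"
  using keys_single_mult[of 0 c r] unfolding deg_less_def const_def by auto

lemma Xv_Suc_mult_in_deg_less:
  assumes "r \<in> deg_less k"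
  shows "Xv (Suc i) * r \<in> deg_less (k + Suc i)"
  unfolding deg_less_def mem_Collect_eq
proof
  fix m assume "m \<in> Poly_Mapping.keys (Xv (Suc i) * r)"
  then obtain b where "b \<in> Poly_Mapping.keys r" and "m = Poly_Mapping.single i 1 + b"
    using keys_single_mult[of "Poly_Mapping.single i 1" 1 r] unfolding Xv_def by auto
  with assms show "wdeg m < k + Suc i"
    unfolding deg_less_def by (auto simp: wdeg_add)
qed

lemma ex_deg_less: "\<exists>k. r \<in> deg_less k"
proof
  show "r \<in> deg_less (Suc (\<Sum>m\<in>Poly_Mapping.keys r. wdeg m))"
    unfolding deg_less_def using member_le_sum[of _ "Poly_Mapping.keys r" wdeg]
    by (simp add: less_Suc_eq_le)
qed

locale shift_derivation =
  fixes d :: "qpoly \<Rightarrow> qpoly"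
  assumes derivation: "is_derivation d"
    and d_Xv_1: "d (Xv 1) = 0"
    and d_Xv: "\<And>n. n \<ge> 2 \<Longrightarrow> d (Xv n) = Xv (n - 1)"
begin

lemma d_add: "d (p + q) = d p + d q"
  using derivation unfolding is_derivation_def by blast

lemma d_const_mult: "d (const c * p) = const c * d p"
  using derivation unfolding is_derivation_def by blast

lemma d_mult: "d (p * q) = p * d q + d p * q"
  using derivation unfolding is_derivation_def by blast

sublocale additive d
  by unfold_locales (rule d_add)

lemma d_one: "d 1 = 0"
  using d_mult[of 1 1] by simp

lemma d_Xv_Suc_Suc: "d (Xv (Suc (Suc n))) = Xv (Suc n)"
  using d_Xv[of "Suc (Suc n)"] by simp

lemma d_Xv_Suc_mult_single_in_deg_less:
  assumes "wdeg m < k"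
  shows "d (Xv (Suc i)) * Poly_Mapping.single m 1 \<in> deg_less (k + i)"
proof (cases i)
  case 0
  then show ?thesis using d_Xv_1 by simp
next
  case (Suc j)
  then show ?thesis
    using assms by (simp add: d_Xv_Suc_Suc Xv_Suc_mult_single wdeg_add single_in_deg_less)
qed

lemma d_single_one_in_deg_less: "d (Poly_Mapping.single m 1) \<in> deg_less (wdeg m)"
proof (induction m rule: nat_poly_mapping_induct)
  case 0
  then show ?case by (simp add: single_one d_one)
next
  case (add_single m i)
  let ?M = "Poly_Mapping.single m (1::rat)"
  have "Xv (Suc i) * d ?M \<in> deg_less (wdeg m + Suc i)"
    using add_single by (rule Xv_Suc_mult_in_deg_less)
  moreover have "d (Xv (Suc i)) * ?M \<in> deg_less (wdeg m + Suc i)"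
    using d_Xv_Suc_mult_single_in_deg_less[of m "Suc (wdeg m)" i] by simp
  ultimately have "d (Xv (Suc i) * ?M) \<in> deg_less (wdeg m + Suc i)"
    unfolding d_mult by (rule add_in_deg_less)
  then show "d (Poly_Mapping.single (m + Poly_Mapping.single i 1) 1)
      \<in> deg_less (wdeg (m + Poly_Mapping.single i 1))"
    by (simp only: Xv_Suc_mult_single wdeg_add wdeg_single mult_1_right)
qed

lemma d_deg_less:
  assumes "r \<in> deg_less (Suc k)"
  shows "d r \<in> deg_less k"
proof -
  have "Poly_Mapping.keys r \<subseteq> {m. wdeg m \<le> k}"
    using assms unfolding deg_less_def by (auto simp: less_Suc_eq_le)
  then show ?thesis
  proof (induction r rule: poly_mapping_single_induct)
    case 0
    show ?case by (simp add: zero)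
  next
    case (plus x y)
    then show ?case by (simp add: d_add add_in_deg_less)
  next
    case (single m c)
    then have "d (Poly_Mapping.single m 1) \<in> deg_less k"
      using deg_less_mono[OF d_single_one_in_deg_less] by simp
    then show ?case
      by (subst single_eq_const_mult) (simp add: d_const_mult const_mult_in_deg_less)
  qed
qed

lemma Xv_Suc_mult_in_range: "Xv (Suc n) * r \<in> range d"
proof -
  have "\<forall>n. Xv (Suc n) * r \<in> range d" if "r \<in> deg_less k" for k r
    using that
  proof (induction k arbitrary: r)
    case 0
    then have "r = 0" unfolding deg_less_def by auto
    then show ?case by (metis mult_zero_right range_eqI zero)
  next
    case (Suc k)
    show ?case
    proof
      fix n
      obtain q where q: "Xv (Suc (Suc n)) * d r = d q"
        using Suc.IH[OF d_deg_less[OF Suc.prems]] by blast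
      have "d (Xv (Suc (Suc n)) * r) = Xv (Suc (Suc n)) * d r + Xv (Suc n) * r"
        by (simp add: d_mult d_Xv_Suc_Suc)
      then have "d (Xv (Suc (Suc n)) * r - q) = Xv (Suc n) * r"
        by (simp add: diff q)
      then show "Xv (Suc n) * r \<in> range d"
        by (metis range_eqI)
    qed
  qed
  then show ?thesis using ex_deg_less by blast
qed

lemma single_in_range: "m \<noteq> 0 \<Longrightarrow> Poly_Mapping.single m c \<in> range d"
proof (induction m rule: nat_poly_mapping_induct)
  case 0
  then show ?case by simp
next
  case (add_single m i)
  show ?case
    using Xv_Suc_mult_in_range[of i "Poly_Mapping.single m c"] by (simp add: Xv_Suc_mult_single)
qed

lemma add_in_range: "a \<in> range d \<Longrightarrow> b \<in> range d \<Longrightarrow> a + b \<in> range d"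
  by (auto simp flip: d_add)

end

theorem lemma8p4:
  fixes d :: "qpoly \<Rightarrow> qpoly" and p :: qpoly and k :: nat
  assumes "is_derivation d"
    and "d (Xv 1) = 0"
    and "\<And>n. n \<ge> 2 \<Longrightarrow> d (Xv n) = Xv (n - 1)"
    and "homogeneous k p" and "k > 0"
  shows "\<exists>q. d q = p"
proof -
  interpret shift_derivation d
    using assms(1-3) by unfold_locales
  have "Poly_Mapping.keys p \<subseteq> {m. m \<noteq> 0}"
    using assms(4,5) unfolding homogeneous_def by auto
  then have "p \<in> range d"
  proof (induction p rule: poly_mapping_single_induct)
    case 0
    show ?case by (metis range_eqI zero)
  qed (simp_all add: add_in_range single_in_range)
  then show ?thesis by (metis rangeE)
qed

end
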